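(* Let $\lambda,\mu\in\mathbb{C}^*$, $\alpha,\beta\in\mathbb{C}$ and $t,t'\in\{1,-1\}$. Then: (i) $\Pi(\mathcal{N}_t(\lambda,\alpha))\not\cong\mathcal{N}_{t'}(\mu',\beta')$ for any $\mu'\in\mathbb{C}^*$, $\beta'\in\mathbb{C}$; (ii) $\mathcal{N}_t(\lambda,\alpha)\cong\mathcal{N}_{t'}(\mu,\beta)$ if and only if $\lambda=\mu$, $\alpha=\beta$ and $t=t'$.
   Context: The twisted $N=2$ superconformal algebra $\mathcal{T}$ is the Lie superalgebra over $\mathbb{C}$ with basis $\{L_m, I_r, G_p\mid m\in\mathbb{Z}, r\in\frac12+\mathbb{Z}, p\in\frac12\mathbb{Z}\}$, even part spanned by the $L_m,I_r$, odd part by the $G_p$, only nonzero brackets $[L_m,L_n]=(m-n)L_{m+n}$, $[L_m,I_r]=-rI_{m+r}$, $[L_m,G_p]=(\frac m2-p)G_{m+p}$, $[I_r,G_p]=G_{r+p}$, $[G_p,G_q]=(-1)^{2p}2L_{p+q}$ if $p+q\in\mathbb{Z}$, $[G_p,G_q]=(-1)^{2p+1}(p-q)I_{p+q}$ if $p+q\in\frac12+\mathbb{Z}$. Modules are $\mathbb{Z}_2$-graded and isomorphisms preserve parity; $\Pi$ is the parity-change functor. For $p\in\frac12\mathbb{Z}$, $\lambda^p$ means $(\lambda^{1/2})^{2p}$ for a fixed square root (likewise for $\mu$). For $\lambda\in\mathbb{C}^*,\alpha\in\mathbb{C},t=\pm1$, $\mathcal{N}_t(\lambda,\alpha)$ is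 the space $\mathbb{C}[x]\mathbf{1}_{\bar0}\oplus\mathbb{C}[y]\mathbf{1}_{\bar1}$ (even part $\mathbb{C}[x]\mathbf{1}_{\bar0}$, odd part $\mathbb{C}[y]\mathbf{1}_{\bar1}$; write $f(x)$ for $f(x)\mathbf{1}_{\bar0}$, $g(y)$ for $g(y)\mathbf{1}_{\bar1}$) with $L_mf(x)=\lambda^m(x+m\alpha)f(x+m)$, $L_mg(y)=\lambda^m(y+m(\alpha+\frac12))g(y+m)$, $I_rf(x)=-2t^{2r}\lambda^r\alpha f(x+r)$, $I_rg(y)=t^{2r}\lambda^r(1-2\alpha)g(y+r)$, $G_pf(x)=t^{2p}\lambda^pf(y+p)$, $G_pg(y)=(-t)^{2p}\lambda^p(x+2p\alpha)g(x+p)$, for $m\in\mathbb{Z}$, $r\in\frac12+\mathbb{Z}$, $p\in\frac12\mathbb{Z}$. *)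

theory Defs
  imports Complex_Main "HOL-Computational_Algebra.Polynomial"
begin

text \<open>
  An element of the module N_t(lambda,alpha) is a pair (f, g) of complex polynomials,
  standing for f(x) 1_0 + g(y) 1_1: the even part is {(f,0)}, the odd part is {(0,g)}.
  Half-integer indices are encoded by their doubles: the generator I_r (r in 1/2 + Z)
  is indexed by the odd integer n = 2r, the generator G_p (p in 1/2 Z) by n = 2p.
  The fixed square root of lambda is csqrt lambda, so lambda^(n/2) = csqrt lambda powi n.
\<close>

definition hpow :: "complex \<Rightarrow> int \<Rightarrow> complex" where
  "hpow lam n = csqrt lam powi n"

definition shiftp :: "complex poly \<Rightarrow> complex \<Rightarrow> complex poly" where
  "shiftp f c = pcompose f [:c, 1:]"

definition NL :: "int \<Rightarrow> complex \<Rightarrow> complex \<Rightarrow> int \<Rightarrow> complex poly \<times> complex poly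
                   \<Rightarrow> complex poly \<times> complex poly" where
  "NL t lam a m v =
     (smult (lam powi m) ([:of_int m * a, 1:] * shiftp (fst v) (of_int m)),
      smult (lam powi m) ([:of_int m * (a + 1/2), 1:] * shiftp (snd v) (of_int m)))"

text \<open>NI t lam a n acts as I_{n/2} (meaningful for odd n).\<close>
definition NI :: "int \<Rightarrow> complex \<Rightarrow> complex \<Rightarrow> int \<Rightarrow> complex poly \<times> complex poly
                   \<Rightarrow> complex poly \<times> complex poly" where
  "NI t lam a n v =
     (smult (- 2 * (of_int t powi n) * hpow lam n * a) (shiftp (fst v) (of_int n / 2)),
      smult ((of_int t powi n) * hpow lam n * (1 - 2 * a)) (shiftp (snd v) (of_int n / 2)))"

definition NG :: "int \<Rightarrow> complex \<Rightarrow> complex \<Rightarrow> int \<Rightarrow> complex poly \<times> complex poly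
                   \<Rightarrow> complex poly \<times> complex poly" where
  "NG t lam a n v =
     (smult ((- of_int t) powi n * hpow lam n)
        ([:of_int n * a, 1:] * shiftp (snd v) (of_int n / 2)),
      smult ((of_int t powi n) * hpow lam n) (shiftp (fst v) (of_int n / 2)))"

definition padd :: "complex poly \<times> complex poly \<Rightarrow> complex poly \<times> complex poly
                    \<Rightarrow> complex poly \<times> complex poly" where
  "padd v w = (fst v + fst w, snd v + snd w)"

definition pscale :: "complex \<Rightarrow> complex poly \<times> complex poly \<Rightarrow> complex poly \<times> complex poly" where
  "pscale c v = (smult c (fst v), smult c (snd v))"

definition plinear :: "(complex poly \<times> complex poly \<Rightarrow> complex poly \<times> complex poly) \<Rightarrow> bool" where
  "plinear \<phi> \<longleftrightarrow> (\<forall>v w. \<phi> (padd v w) = padd (\<phi> v) (\<phi> w)) \<and> (\<forall>c v. \<phi> (pscale c v) = pscale c (\<phi> v))"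

definition intertwines ::
  "(complex poly \<times> complex poly \<Rightarrow> complex poly \<times> complex poly)
   \<Rightarrow> int \<Rightarrow> complex \<Rightarrow> complex \<Rightarrow> int \<Rightarrow> complex \<Rightarrow> complex \<Rightarrow> bool" where
  "intertwines \<phi> t lam a t' mu b \<longleftrightarrow>
     (\<forall>m v. \<phi> (NL t lam a m v) = NL t' mu b m (\<phi> v)) \<and>
     (\<forall>n v. odd n \<longrightarrow> \<phi> (NI t lam a n v) = NI t' mu b n (\<phi> v)) \<and>
     (\<forall>n v. \<phi> (NG t lam a n v) = NG t' mu b n (\<phi> v))"

definition N_iso :: "int \<Rightarrow> complex \<Rightarrow> complex \<Rightarrow> int \<Rightarrow> complex \<Rightarrow> complex \<Rightarrow> bool" where
  "N_iso t lam a t' mu b \<longleftrightarrow> (\<exists>\<phi>. plinear \<phi> \<and> bij \<phi> \<and>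
      (\<forall>f. snd (\<phi> (f, 0)) = 0) \<and> (\<forall>g. fst (\<phi> (0, g)) = 0) \<and>
      intertwines \<phi> t lam a t' mu b)"

text \<open>Parity-preserving isomorphism Pi(N_t(lam,a)) \<cong> N_t'(mu,b): in Pi(N_t(lam,a)) the
  even part is C[y]1_1 and the odd part is C[x]1_0 with the same action, so such an
  isomorphism is a bijective intertwiner of N_t(lam,a) with N_t'(mu,b) that swaps parity.\<close>
definition Pi_N_iso :: "int \<Rightarrow> complex \<Rightarrow> complex \<Rightarrow> int \<Rightarrow> complex \<Rightarrow> complex \<Rightarrow> bool" where
  "Pi_N_iso t lam a t' mu b \<longleftrightarrow> (\<exists>\<phi>. plinear \<phi> \<and> bij \<phi> \<and>
      (\<forall>f. fst (\<phi> (f, 0)) = 0) \<and> (\<forall>g. snd (\<phi> (0, g)) = 0) \<and>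
      intertwines \<phi> t lam a t' mu b)"

end

(*
  L_0 acts on both components of N_t(lambda, alpha) as multiplication by x, so a linear map
  commuting with L_0 is multiplication by a 2x2 matrix of polynomials. Preserving (resp.
  swapping) parity makes the matrix diagonal (resp. antidiagonal), and bijectivity makes its
  entries units, i.e. nonzero constants. Comparing L_1 on 1_0 and 1_1 then gives lambda = mu
  and alpha = beta, while under the parity change it gives the incompatible alpha = beta + 1/2
  and alpha + 1/2 = beta. Finally I_{1/2} gives t alpha = t' alpha and
  t (1 - 2 alpha) = t' (1 - 2 alpha), and alpha and 1 - 2 alpha do not both vanish.
*)
theory Submission
  imports Defs
begin

lemma poly_hom_commuting_with_x_eq_mult:
  fixes \<psi> :: "'a::comm_semiring_1 poly \<Rightarrow> 'a poly"
  assumes add: "\<And>p q. \<psi> (p + q) = \<psi> p + \<psi> q"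
    and smult: "\<And>c p. \<psi> (smult c p) = smult c (\<psi> p)"
    and x: "\<And>p. \<psi> ([:0, 1:] * p) = [:0, 1:] * \<psi> p"
  shows "\<psi> p = p * \<psi> 1"
proof (induction p rule: pCons_induct)
  case 0
  have "\<psi> 0 = \<psi> (smult 0 0)" by simp
  also have "\<dots> = 0" by (simp only: smult) simp
  finally show ?case by simp
next
  case (pCons a p)
  have pCons_eq: "pCons a p = smult a 1 + [:0, 1:] * p" by (simp add: one_pCons)
  have "\<psi> (pCons a p) = smult a (\<psi> 1) + [:0, 1:] * (p * \<psi> 1)"
    by (simp only: pCons_eq add smult x pCons.IH)
  also have "\<dots> = (smult a 1 + [:0, 1:] * p) * \<psi> 1" by (simp add: algebra_simps)
  also have "\<dots> = pCons a p * \<psi> 1" by (simp only: pCons_eq)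
  finally show ?case .
qed

lemma plinear_commuting_with_x_eq_matrix:
  assumes lin: "plinear \<phi>"
    and x: "\<And>f g. \<phi> ([:0, 1:] * f, [:0, 1:] * g) =
                   ([:0, 1:] * fst (\<phi> (f, g)), [:0, 1:] * snd (\<phi> (f, g)))"
  shows "\<phi> (f, g) = (f * fst (\<phi> (1, 0)) + g * fst (\<phi> (0, 1)),
                     f * snd (\<phi> (1, 0)) + g * snd (\<phi> (0, 1)))"
proof -
  have add: "\<phi> (f + f', g + g') = padd (\<phi> (f, g)) (\<phi> (f', g'))" for f f' g g'
    using lin unfolding plinear_def by (metis padd_def fst_conv snd_conv)
  have smult: "\<phi> (smult c f, smult c g) = pscale c (\<phi> (f, g))" for c f g
    using lin unfolding plinear_def by (metis pscale_def fst_conv snd_conv)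
  have entry: "sel (\<phi> (emb p)) = p * sel (\<phi> (emb 1))"
    if "sel = fst \<or> sel = snd" and "emb = (\<lambda>p. (p, 0)) \<or> emb = (\<lambda>p. (0, p))" for sel emb p
  proof (rule poly_hom_commuting_with_x_eq_mult)
    show "sel (\<phi> (emb (p + q))) = sel (\<phi> (emb p)) + sel (\<phi> (emb q))" for p q
      using that add[of p q 0 0] add[of 0 0 p q] by (elim disjE) (simp_all add: padd_def)
    show "sel (\<phi> (emb (smult c p))) = smult c (sel (\<phi> (emb p)))" for c p
      using that smult[of c p 0] smult[of c 0 p] by (elim disjE) (simp_all add: pscale_def)
    show "sel (\<phi> (emb ([:0, 1:] * p))) = [:0, 1:] * sel (\<phi> (emb p))" for p
      using that x[of p 0] x[of 0 p] by (elim disjE) simp_all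
  qed
  have "\<phi> (f, g) = padd (\<phi> (f, 0)) (\<phi> (0, g))"
    using add[of f 0 0 g] by simp
  then show ?thesis
    using entry[of fst "\<lambda>p. (p, 0)" f] entry[of fst "\<lambda>p. (0, p)" g]
      entry[of snd "\<lambda>p. (p, 0)" f] entry[of snd "\<lambda>p. (0, p)" g]
    by (simp add: padd_def)
qed

lemma intertwines_commutes_with_x:
  assumes "intertwines \<phi> t lam a t' mu b"
  shows "\<And>f g. \<phi> ([:0, 1:] * f, [:0, 1:] * g) =
                 ([:0, 1:] * fst (\<phi> (f, g)), [:0, 1:] * snd (\<phi> (f, g)))"
  using assms[unfolded intertwines_def, THEN conjunct1, rule_format, of 0 "(f, g)" for f g]
  by (simp add: NL_def shiftp_def)

lemma mult_eq_1_imp_poly_const: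
  fixes h :: "'a::field poly"
  assumes "p * h = 1"
  obtains c where "c \<noteq> 0" and "h = [:c:]"
proof -
  have "h dvd 1" using assms by (metis dvd_triv_right)
  then obtain c where "h = [:c:]" and "c dvd 1" by (auto simp: is_unit_poly_iff)
  then show thesis using that by fastforce
qed

lemma surj_diagonal_mult_imp_const:
  fixes h k :: "'a::field poly"
  assumes "surj \<phi>" and \<phi>: "\<And>f g. \<phi> (f, g) = (f * h, g * k)"
  obtains c d where "c \<noteq> 0" and "d \<noteq> 0" and "h = [:c:]" and "k = [:d:]"
proof -
  obtain v w where "(1, 0) = \<phi> v" and "(0, 1) = \<phi> w"
    using surjD[OF \<open>surj \<phi>\<close>] by metis
  then have "fst v * h = 1" and "snd w * k = 1"
    using \<phi>[of "fst v" "snd v"] \<phi>[of "fst w" "snd w"] by simp_all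
  then show thesis
    by (metis that mult_eq_1_imp_poly_const)
qed

lemma N_iso_imp_scalar_intertwiner:
  assumes "N_iso t lam a t' mu b"
  obtains c d :: complex where "c \<noteq> 0" and "d \<noteq> 0"
    and "intertwines (\<lambda>(f, g). (smult c f, smult d g)) t lam a t' mu b"
proof -
  obtain \<phi> where lin: "plinear \<phi>" and "bij \<phi>"
    and even: "\<forall>f. snd (\<phi> (f, 0)) = 0" and odd: "\<forall>g. fst (\<phi> (0, g)) = 0"
    and itw: "intertwines \<phi> t lam a t' mu b"
    using assms unfolding N_iso_def by blast
  note matrix = plinear_commuting_with_x_eq_matrix[where \<phi> = \<phi>,
      OF lin intertwines_commutes_with_x[OF itw]]
  define h k where "h = fst (\<phi> (1, 0))" and "k = snd (\<phi> (0, 1))"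
  have \<phi>: "\<phi> (f, g) = (f * h, g * k)" for f g
    using matrix[of f g] even odd unfolding h_def k_def by simp
  obtain c d where "c \<noteq> 0" "d \<noteq> 0" "h = [:c:]" "k = [:d:]"
    using surj_diagonal_mult_imp_const[OF bij_is_surj[OF \<open>bij \<phi>\<close>] \<phi>] .
  moreover from this have "\<phi> = (\<lambda>(f, g). (smult c f, smult d g))"
    by (auto simp: \<phi>)
  ultimately show thesis using itw by (intro that) simp_all
qed

lemma Pi_N_iso_imp_scalar_intertwiner:
  assumes "Pi_N_iso t lam a t' mu b"
  obtains c d :: complex where "c \<noteq> 0" and "d \<noteq> 0"
    and "intertwines (\<lambda>(f, g). (smult d g, smult c f)) t lam a t' mu b"
proof -
  obtain \<phi> where lin: "plinear \<phi>" and "bij \<phi>"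
    and even: "\<forall>f. fst (\<phi> (f, 0)) = 0" and odd: "\<forall>g. snd (\<phi> (0, g)) = 0"
    and itw: "intertwines \<phi> t lam a t' mu b"
    using assms unfolding Pi_N_iso_def by blast
  note matrix = plinear_commuting_with_x_eq_matrix[where \<phi> = \<phi>,
      OF lin intertwines_commutes_with_x[OF itw]]
  define h k where "h = snd (\<phi> (1, 0))" and "k = fst (\<phi> (0, 1))"
  have \<phi>: "\<phi> (f, g) = (g * k, f * h)" for f g
    using matrix[of f g] even odd unfolding h_def k_def by simp
  from comp_surj[OF bij_is_surj[OF \<open>bij \<phi>\<close>] surj_swap]
  obtain c d where "c \<noteq> 0" "d \<noteq> 0" "h = [:c:]" "k = [:d:]"
    by (rule surj_diagonal_mult_imp_const[where h = h and k = k]) (simp add: \<phi>)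
  moreover from this have "\<phi> = (\<lambda>(f, g). (smult d g, smult c f))"
    by (auto simp: \<phi>)
  ultimately show thesis using itw by (intro that) simp_all
qed

lemma scalar_intertwiner_imp_eq:
  assumes "lam \<noteq> 0" and "c \<noteq> 0" and "d \<noteq> 0"
    and itw: "intertwines (\<lambda>(f, g). (smult c f, smult d g)) t lam a t' mu b"
  shows "lam = mu \<and> a = b \<and> t = t'"
proof -
  have L1: "(case NL t lam a 1 v of (f, g) \<Rightarrow> (smult c f, smult d g))
             = NL t' mu b 1 (case v of (f, g) \<Rightarrow> (smult c f, smult d g))"
    and I_half: "(case NI t lam a 1 v of (f, g) \<Rightarrow> (smult c f, smult d g))
             = NI t' mu b 1 (case v of (f, g) \<Rightarrow> (smult c f, smult d g))" for v
    using itw odd_one unfolding intertwines_def by blast+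
  have "smult (c * lam) [:a, 1:] = smult (c * mu) [:b, 1:]"
    using L1[of "(1, 0)"] by (simp add: NL_def shiftp_def one_pCons)
  then have "lam = mu" and "a = b"
    using \<open>c \<noteq> 0\<close> \<open>lam \<noteq> 0\<close> by auto
  have "of_int t * csqrt lam * a * c = of_int t' * csqrt mu * b * c"
    using I_half[of "(1, 0)"] by (simp add: NI_def shiftp_def hpow_def one_pCons mult.assoc)
  moreover have "of_int t * csqrt lam * (1 - 2 * a) * d = of_int t' * csqrt mu * (1 - 2 * b) * d"
    using I_half[of "(0, 1)"] by (simp add: NI_def shiftp_def hpow_def one_pCons mult.assoc)
  ultimately have "of_int t * a = of_int t' * a"
    and "of_int t * (1 - 2 * a) = of_int t' * (1 - 2 * a)"
    using \<open>lam = mu\<close> \<open>a = b\<close> \<open>lam \<noteq> 0\<close> \<open>c \<noteq> 0\<close> \<open>d \<noteq> 0\<close> by simp_all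
  then have "(of_int t :: complex) = of_int t'"
    by (cases "a = 0") simp_all
  with \<open>lam = mu\<close> \<open>a = b\<close> show ?thesis by simp
qed

lemma swapping_scalar_not_intertwiner:
  assumes "lam \<noteq> 0" and "c \<noteq> 0" and "d \<noteq> 0"
  shows "\<not> intertwines (\<lambda>(f, g). (smult d g, smult c f)) t lam a t' mu b"
proof
  assume "intertwines (\<lambda>(f, g). (smult d g, smult c f)) t lam a t' mu b"
  then have L1: "(case NL t lam a 1 v of (f, g) \<Rightarrow> (smult d g, smult c f))
                 = NL t' mu b 1 (case v of (f, g) \<Rightarrow> (smult d g, smult c f))" for v
    unfolding intertwines_def by blast
  have "smult (c * lam) [:a, 1:] = smult (c * mu) [:b + 1/2, 1:]"
    using L1[of "(1, 0)"] by (simp add: NL_def shiftp_def one_pCons)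
  moreover have "smult (d * lam) [:a + 1/2, 1:] = smult (d * mu) [:b, 1:]"
    using L1[of "(0, 1)"] by (simp add: NL_def shiftp_def one_pCons)
  ultimately have "a = b + 1/2" and "a + 1/2 = b"
    using \<open>lam \<noteq> 0\<close> \<open>c \<noteq> 0\<close> \<open>d \<noteq> 0\<close> by auto
  then show False by simp
qed

lemma N_iso_refl: "N_iso t lam a t lam a"
  unfolding N_iso_def plinear_def intertwines_def by (intro exI[of _ id]) auto

theorem theorem2p11:
  fixes lam mu a b :: complex and t t' :: int
  assumes "lam \<noteq> 0" "mu \<noteq> 0" "t \<in> {1, -1}" "t' \<in> {1, -1}"
  shows "(\<forall>mu' b'. mu' \<noteq> 0 \<longrightarrow> \<not> Pi_N_iso t lam a t' mu' b')
         \<and> (N_iso t lam a t' mu b \<longleftrightarrow> lam = mu \<and> a = b \<and> t = t')"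
proof (intro conjI allI impI notI)
  fix mu' b'
  assume "Pi_N_iso t lam a t' mu' b'"
  then obtain c d where "c \<noteq> 0" "d \<noteq> 0"
    and "intertwines (\<lambda>(f, g). (smult d g, smult c f)) t lam a t' mu' b'"
    by (rule Pi_N_iso_imp_scalar_intertwiner)
  with \<open>lam \<noteq> 0\<close> show False
    using swapping_scalar_not_intertwiner by blast
next
  show "N_iso t lam a t' mu b \<longleftrightarrow> lam = mu \<and> a = b \<and> t = t'"
  proof
    assume "N_iso t lam a t' mu b"
    then obtain c d where "c \<noteq> 0" "d \<noteq> 0"
      and "intertwines (\<lambda>(f, g). (smult c f, smult d g)) t lam a t' mu b"
      by (rule N_iso_imp_scalar_intertwiner)
    with \<open>lam \<noteq> 0\<close> show "lam = mu \<and> a = b \<and> t = t'"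
      by (rule scalar_intertwiner_imp_eq)
  next
    assume "lam = mu \<and> a = b \<and> t = t'"
    then show "N_iso t lam a t' mu b" using N_iso_refl by simp
  qed
qed

end
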